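(* Let $K$, $\mu_0$, $\omega$, $f^{\mathrm{que}}$ and $S^{\mathrm{que}}$ be as in the context. For $\mathbb P$-a.e. $\omega$ the following holds for all $\beta\in[0,\infty)$ and $h\in\mathbb R$: if $S^{\mathrm{que}}(\beta;1-)<h$ then $f^{\mathrm{que}}(\beta,h)=0$, and if $S^{\mathrm{que}}(\beta;1-)>h$ then $f^{\mathrm{que}}(\beta,h)>0$.
   Context: Let $K$ be a probability distribution on $\mathbb N=\{1,2,\dots\}$ such that $\lim_{n\to\infty}\log K(n)/\log n=-(1+\alpha)$ for some $\alpha\in[0,\infty)$. Let $\mu_0$ be a probability measure on $\mathbb R$ with mean $0$, variance $1$, and $M(\lambda):=\int e^{\lambda x}\,d\mu_0(x)<\infty$ for all $\lambda\in\mathbb R$. Let $\omega=(\omega_k)_{k\ge 0}$ be i.i.d. with law $\mu_0$ (law $\mathbb P$). For $\beta\ge 0$, $h\in\mathbb R$ put $Z_n^{\beta,h,\omega}=\sum_{N\ge1}\sum_{0=k_0<k_1<\dots<k_N=n}\prod_{i=1}^N K(k_i-k_{i-1})\,e^{\beta\omega_{k_{i-1}}-h}$; the quenched free energy $f^{\mathrm{que}}(\beta,h)=\lim_{n}\frac1n\log Z_n^{\beta,h,\omega}$ exists $\mathbb P$-a.s., is non-random and $\ge0$. Let $0=k_0<k_1<k_2<\cdots$ be a renewal process with i.i.d. increments of law $K$, with expectation $E_K$. For $z\in(0,1]$ define $S^{\mathrm{que}}(\beta;z):=\limsup_{N\to\infty}\frac1N\log E_K\big[z^{k_N}\exp\big(\beta\sum_{i=1}^N\omega_{k_{i-1}}\big)\big]$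 and $S^{\mathrm{que}}(\beta;1-):=\lim_{z\uparrow1}S^{\mathrm{que}}(\beta;z)$ (monotone limit). *)

theory Defs
  imports "HOL-Probability.Probability"
begin

definition Zpart :: "(nat \<Rightarrow> real) \<Rightarrow> real \<Rightarrow> real \<Rightarrow> (nat \<Rightarrow> real) \<Rightarrow> nat \<Rightarrow> real" where
  "Zpart K \<beta> h \<omega> n =
    (\<Sum>N\<in>{1..n}. \<Sum>k\<in>{k \<in> {0..N} \<rightarrow>\<^sub>E {0..n}. k 0 = 0 \<and> k N = n \<and> (\<forall>i<N. k i < k (Suc i))}.
        \<Prod>i\<in>{1..N}. K (k i - k (i - 1)) * exp (\<beta> * \<omega> (k (i - 1)) - h))"

text \<open>Quenched free energy: the (assumed to exist, non-random) a.s. limit of (1/n) log Z_n.\<close>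
definition f_que :: "real measure \<Rightarrow> (nat \<Rightarrow> real) \<Rightarrow> real \<Rightarrow> real \<Rightarrow> real" where
  "f_que \<mu>0 K \<beta> h =
    (THE c. AE \<omega> in (\<Pi>\<^sub>M i\<in>(UNIV::nat set). \<mu>0).
        (\<lambda>n. ln (Zpart K \<beta> h \<omega> n) / real n) \<longlonglongrightarrow> c)"

text \<open>E_K[z^{k_N} exp(beta sum_{i=1}^N omega_{k_{i-1}})] for the renewal process with
  i.i.d. increments t_0,...,t_{N-1} of law K (expectation = integral w.r.t. counting measure
  weighted by prod K(t_i)); k_{i} = t_0 + ... + t_{i-1}.\<close>
definition renewal_E :: "(nat \<Rightarrow> real) \<Rightarrow> real \<Rightarrow> real \<Rightarrow> (nat \<Rightarrow> real) \<Rightarrow> nat \<Rightarrow> ennreal" where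
  "renewal_E K z \<beta> \<omega> N =
    (\<integral>\<^sup>+ t. ennreal ((\<Prod>i<N. K (t i)) * z ^ (\<Sum>i<N. t i) * exp (\<beta> * (\<Sum>i<N. \<omega> (\<Sum>j<i. t j))))
       \<partial>count_space ({..<N} \<rightarrow>\<^sub>E (UNIV::nat set)))"

definition ln_enn :: "ennreal \<Rightarrow> ereal" where
  "ln_enn x = (if x = \<infinity> then \<infinity> else if x = 0 then -\<infinity> else ereal (ln (enn2real x)))"

definition S_que :: "(nat \<Rightarrow> real) \<Rightarrow> real \<Rightarrow> real \<Rightarrow> (nat \<Rightarrow> real) \<Rightarrow> ereal" where
  "S_que K \<beta> z \<omega> = limsup (\<lambda>N. ereal (1 / real N) * ln_enn (renewal_E K z \<beta> \<omega> N))"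

definition S_que_left :: "(nat \<Rightarrow> real) \<Rightarrow> real \<Rightarrow> (nat \<Rightarrow> real) \<Rightarrow> ereal" where
  "S_que_left K \<beta> \<omega> = Lim (at_left (1::real)) (\<lambda>z. S_que K \<beta> z \<omega>)"

end

theory Submission
  imports Defs "HOL-Real_Asymp.Real_Asymp"
begin

text \<open>Grouping renewal paths by their number N of renewals, Z_n = \<Sum>_N e^(-hN) W_N(n), and the
  generating function \<Sum>_n z^n W_N(n) of the pinned sums W_N (pinned_partition) is exactly
  the renewal expectation E_K[z^(k_N) exp(\<beta> \<Sigma> \<omega>)] defining S(\<beta>;z).
  If S(\<beta>;z) < h for some z < 1, then z^n e^(-hN) W_N(n) \<le> 1 for all large N, while the finitely
  many small N contribute only polynomially in n because |\<omega>_j| = O(log j) almost surely; hence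
  Z_n \<le> poly(n) z^(-n) and f \<le> -ln z, which tends to 0 as z \<up> 1.
  If S(\<beta>;z) > h but f < -ln z, then Z_n \<le> e^(dn) with z e^d < 1, which bounds the renewal
  expectation by e^(hN) times a geometric tail and forces S(\<beta>;z) \<le> h; so f \<ge> -ln z > 0.
  The null set is made independent of (\<beta>, h) via a rational grid, since (1/n) ln Z_n is
  Lipschitz in (\<beta>, h) when \<Sigma>_(k<n) |\<omega>_k| = O(n).\<close>

definition renewal_paths :: "nat \<Rightarrow> nat \<Rightarrow> (nat \<Rightarrow> nat) set" where
  "renewal_paths N n = {k \<in> {0..N} \<rightarrow>\<^sub>E {0..n}. k 0 = 0 \<and> k N = n \<and> (\<forall>i<N. k i < k (Suc i))}"

definition path_weight :: "(nat \<Rightarrow> real) \<Rightarrow> nat \<Rightarrow> (nat \<Rightarrow> nat) \<Rightarrow> real" where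
  "path_weight K N k = (\<Prod>i\<in>{1..N}. K (k i - k (i - 1)))"

definition path_disorder :: "(nat \<Rightarrow> real) \<Rightarrow> nat \<Rightarrow> (nat \<Rightarrow> nat) \<Rightarrow> real" where
  "path_disorder \<omega> N k = (\<Sum>i\<in>{1..N}. \<omega> (k (i - 1)))"

definition pinned_partition :: "(nat \<Rightarrow> real) \<Rightarrow> real \<Rightarrow> (nat \<Rightarrow> real) \<Rightarrow> nat \<Rightarrow> nat \<Rightarrow> real" where
  "pinned_partition K \<beta> \<omega> N n = (\<Sum>k\<in>renewal_paths N n. path_weight K N k * exp (\<beta> * path_disorder \<omega> N k))"

lemma renewal_paths_strict_mono:
  assumes "k \<in> renewal_paths N n" "i < j" "j \<le> N"
  shows "k i < k j"
  using assms(2,3)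
proof (induction j)
  case (Suc j)
  have "k j < k (Suc j)" using assms(1) Suc.prems unfolding renewal_paths_def by auto
  with Suc show ?case by (cases "i = j") auto
qed simp

lemma renewal_paths_subset: "renewal_paths N n \<subseteq> {0..N} \<rightarrow>\<^sub>E {0..n}"
  unfolding renewal_paths_def by auto

lemma finite_renewal_paths: "finite (renewal_paths N n)"
  by (rule finite_subset[OF renewal_paths_subset]) (intro finite_PiE, auto)

lemma card_renewal_paths_le: "card (renewal_paths N n) \<le> (n + 1) ^ (N + 1)"
proof -
  have "card (renewal_paths N n) \<le> card ({0..N} \<rightarrow>\<^sub>E {0..n})"
    by (intro card_mono renewal_paths_subset) (auto intro!: finite_PiE)
  then show ?thesis by (simp add: card_PiE)
qed

lemma renewal_paths_empty: 
  assumes "n < N" shows "renewal_paths N n = {}"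
proof (rule ccontr)
  assume "renewal_paths N n \<noteq> {}"
  then obtain k where k: "k \<in> renewal_paths N n" by auto
  have "i \<le> k i" if "i \<le> N" for i
    using that
  proof (induction i)
    case (Suc i)
    then show ?case using renewal_paths_strict_mono[OF k, of i "Suc i"] by simp
  qed simp
  then have "N \<le> k N" by simp
  with k assms show False unfolding renewal_paths_def by simp
qed

lemma renewal_path_sum_le:
  assumes k: "k \<in> renewal_paths N n" and f: "\<And>j. f j \<ge> 0"
  shows "(\<Sum>i\<in>{1..N}. f (k (i - 1))) \<le> (\<Sum>j<n. f j :: real)"
proof -
  have "inj_on k {..<N}"
  proof (rule inj_onI)
    fix a b assume "a \<in> {..<N}" "b \<in> {..<N}" "k a = k b"
    then show "a = b"
      using renewal_paths_strict_mono[OF k, of a b] renewal_paths_strict_mono[OF k, of b a]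
      by (cases a b rule: linorder_cases) auto
  qed
  moreover have "k ` {..<N} \<subseteq> {..<n}"
    using renewal_paths_strict_mono[OF k, of _ N] k unfolding renewal_paths_def by auto
  ultimately have "(\<Sum>i<N. f (k i)) \<le> (\<Sum>j<n. f j)"
    using f by (subst sum.reindex[symmetric, unfolded comp_def]) (auto intro!: sum_mono2)
  then show ?thesis by (simp add: sum.atLeast1_atMost_eq)
qed

lemma Zpart_eq_sum_paths:
  "Zpart K \<beta> h \<omega> n =
     (\<Sum>N\<in>{1..n}. \<Sum>k\<in>renewal_paths N n. path_weight K N k * exp (\<beta> * path_disorder \<omega> N k - h * N))"
  unfolding Zpart_def renewal_paths_def[symmetric]
proof (intro sum.cong refl)
  fix N k
  have "(\<Prod>i\<in>{1..N}. K (k i - k (i - 1)) * exp (\<beta> * \<omega> (k (i - 1)) - h))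
     = path_weight K N k * exp (\<Sum>i\<in>{1..N}. \<beta> * \<omega> (k (i - 1)) - h)"
    unfolding path_weight_def by (simp add: prod.distrib exp_sum)
  also have "(\<Sum>i\<in>{1..N}. \<beta> * \<omega> (k (i - 1)) - h) = \<beta> * path_disorder \<omega> N k - h * N"
    unfolding path_disorder_def by (simp add: sum_subtractf sum_distrib_left)
  finally show "(\<Prod>i\<in>{1..N}. K (k i - k (i - 1)) * exp (\<beta> * \<omega> (k (i - 1)) - h)) =
      path_weight K N k * exp (\<beta> * path_disorder \<omega> N k - h * N)" .
qed

lemma Zpart_eq_sum_pinned:
  "Zpart K \<beta> h \<omega> n = (\<Sum>N\<in>{1..n}. exp (- h * N) * pinned_partition K \<beta> \<omega> N n)"
  unfolding Zpart_eq_sum_paths pinned_partition_def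
  by (intro sum.cong refl) (simp add: sum_distrib_left exp_diff exp_minus field_simps)

lemma path_weight_nonneg: "(\<And>n. K n \<ge> 0) \<Longrightarrow> path_weight K N k \<ge> 0"
  unfolding path_weight_def by (intro prod_nonneg) auto

lemma path_weight_le_1: "(\<And>n. K n \<ge> 0) \<Longrightarrow> (\<And>n. K n \<le> 1) \<Longrightarrow> path_weight K N k \<le> 1"
  unfolding path_weight_def by (intro prod_le_1) auto

lemma pinned_partition_nonneg: "(\<And>n. K n \<ge> 0) \<Longrightarrow> pinned_partition K \<beta> \<omega> N n \<ge> 0"
  unfolding pinned_partition_def by (intro sum_nonneg mult_nonneg_nonneg path_weight_nonneg) auto

lemma pinned_partition_eq_0: "n < N \<Longrightarrow> pinned_partition K \<beta> \<omega> N n = 0"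
  unfolding pinned_partition_def by (simp add: renewal_paths_empty)

lemma Zpart_nonneg: "(\<And>n. K n \<ge> 0) \<Longrightarrow> Zpart K \<beta> h \<omega> n \<ge> 0"
  unfolding Zpart_eq_sum_pinned by (intro sum_nonneg mult_nonneg_nonneg pinned_partition_nonneg) auto

lemma pinned_partition_le_Zpart:
  assumes "\<And>n. K n \<ge> 0" "1 \<le> N" "N \<le> n"
  shows "exp (- h * N) * pinned_partition K \<beta> \<omega> N n \<le> Zpart K \<beta> h \<omega> n"
  unfolding Zpart_eq_sum_pinned using assms
  by (intro member_le_sum[where f = "\<lambda>N. exp (- h * N) * pinned_partition K \<beta> \<omega> N n"]
      mult_nonneg_nonneg pinned_partition_nonneg) auto

lemma Zpart_ge_single_jump:
  assumes K: "\<And>n. K n \<ge> 0" and n: "1 \<le> n"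
  shows "K n * exp (\<beta> * \<omega> 0 - h) \<le> Zpart K \<beta> h \<omega> n"
proof -
  define k where "k = restrict (\<lambda>i. if i = 0 then 0 else n) {0..1::nat}"
  have k: "k \<in> renewal_paths 1 n" unfolding k_def renewal_paths_def using n by auto
  have "K n * exp (\<beta> * \<omega> 0) = path_weight K 1 k * exp (\<beta> * path_disorder \<omega> 1 k)"
    unfolding path_weight_def path_disorder_def k_def using n by simp
  also have "\<dots> \<le> pinned_partition K \<beta> \<omega> 1 n"
    unfolding pinned_partition_def using k K
    by (intro member_le_sum mult_nonneg_nonneg path_weight_nonneg finite_renewal_paths) auto
  finally have "exp (- h) * (K n * exp (\<beta> * \<omega> 0)) \<le> exp (- h) * pinned_partition K \<beta> \<omega> 1 n"
    by simp
  also have "\<dots> \<le> Zpart K \<beta> h \<omega> n"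
    using pinned_partition_le_Zpart[where K=K, OF K order_refl n] by simp
  finally have "exp (- h) * (K n * exp (\<beta> * \<omega> 0)) \<le> Zpart K \<beta> h \<omega> n" .
  then show ?thesis by (simp add: exp_diff exp_minus field_simps)
qed

lemma Zpart_pos:
  assumes "\<And>n. K n \<ge> 0" "1 \<le> n" "K n > 0"
  shows "Zpart K \<beta> h \<omega> n > 0"
  using Zpart_ge_single_jump[OF assms(1,2), where \<beta>=\<beta> and \<omega>=\<omega> and h=h] assms(3)
  by (meson exp_gt_zero less_le_trans mult_pos_pos)

definition renewal_integrand ::
    "(nat \<Rightarrow> real) \<Rightarrow> real \<Rightarrow> real \<Rightarrow> (nat \<Rightarrow> real) \<Rightarrow> nat \<Rightarrow> (nat \<Rightarrow> nat) \<Rightarrow> real" where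
  "renewal_integrand K z \<beta> \<omega> N t =
     (\<Prod>i<N. K (t i)) * z ^ (\<Sum>i<N. t i) * exp (\<beta> * (\<Sum>i<N. \<omega> (\<Sum>j<i. t j)))"

definition increments_summing_to :: "nat \<Rightarrow> nat \<Rightarrow> (nat \<Rightarrow> nat) set" where
  "increments_summing_to N m = {t \<in> {..<N} \<rightarrow>\<^sub>E UNIV. (\<Sum>i<N. t i) = m}"

lemma finite_increments_summing_to: "finite (increments_summing_to N m)"
proof (rule finite_subset)
  show "increments_summing_to N m \<subseteq> {..<N} \<rightarrow>\<^sub>E {0..m}"
  proof
    fix t assume t: "t \<in> increments_summing_to N m"
    have "t i \<le> m" if "i < N" for i
      using t member_le_sum[of i "{..<N}" t] that unfolding increments_summing_to_def by auto
    then show "t \<in> {..<N} \<rightarrow>\<^sub>E {0..m}" using t unfolding increments_summing_to_def by auto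
  qed
qed (intro finite_PiE, auto)

lemma renewal_integrand_nonneg: "(\<And>n. K n \<ge> 0) \<Longrightarrow> z \<ge> 0 \<Longrightarrow> renewal_integrand K z \<beta> \<omega> N t \<ge> 0"
  unfolding renewal_integrand_def by (intro mult_nonneg_nonneg prod_nonneg) auto

lemma sum_diff_nat_telescope:
  assumes "\<And>j. j < i \<Longrightarrow> (k j :: nat) \<le> k (Suc j)"
  shows "(\<Sum>j<i. k (Suc j) - k j) = k i - k 0 \<and> k 0 \<le> k i"
  using assms
proof (induction i)
  case (Suc i)
  then have "(\<Sum>j<i. k (Suc j) - k j) = k i - k 0" "k 0 \<le> k i" "k i \<le> k (Suc i)" by auto
  then show ?case by simp
qed simp

definition partial_sums :: "nat \<Rightarrow> (nat \<Rightarrow> nat) \<Rightarrow> nat \<Rightarrow> nat" where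
  "partial_sums N t = restrict (\<lambda>i. \<Sum>j<i. t j) {0..N}"

definition increments :: "nat \<Rightarrow> (nat \<Rightarrow> nat) \<Rightarrow> nat \<Rightarrow> nat" where
  "increments N k = restrict (\<lambda>i. k (Suc i) - k i) {..<N}"

lemma increments_partial_sums:
  assumes "t \<in> {..<N} \<rightarrow>\<^sub>E UNIV"
  shows "increments N (partial_sums N t) = t"
proof (rule ext)
  fix i show "increments N (partial_sums N t) i = t i"
    using assms by (cases "i < N") (auto simp: increments_def partial_sums_def PiE_def extensional_def)
qed

lemma partial_sums_increments:
  assumes k: "k \<in> renewal_paths N m"
  shows "partial_sums N (increments N k) = k" and "(\<Sum>i<N. increments N k i) = m"
proof -
  have "k j \<le> k (Suc j)" if "j < N" for j
    using k that unfolding renewal_paths_def by (simp add: less_imp_le)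
  then have tel: "(\<Sum>j<i. increments N k j) = k i" if "i \<le> N" for i
    using sum_diff_nat_telescope[of i k] k that unfolding renewal_paths_def increments_def by simp
  show "partial_sums N (increments N k) = k"
  proof (rule ext)
    fix i show "partial_sums N (increments N k) i = k i"
      using tel[of i] k unfolding partial_sums_def renewal_paths_def
      by (cases "i \<le> N") (auto simp: PiE_def extensional_def)
  qed
  show "(\<Sum>i<N. increments N k i) = m" using tel[of N] k unfolding renewal_paths_def by simp
qed

lemma bij_betw_partial_sums:
  "bij_betw (partial_sums N) {t \<in> increments_summing_to N m. \<forall>i<N. 0 < t i} (renewal_paths N m)"
proof (rule bij_betw_byWitness[where f' = "increments N"])
  show "\<forall>t\<in>{t \<in> increments_summing_to N m. \<forall>i<N. 0 < t i}. increments N (partial_sums N t) = t"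
    unfolding increments_summing_to_def by (auto intro: increments_partial_sums)
  show "\<forall>k\<in>renewal_paths N m. partial_sums N (increments N k) = k"
    using partial_sums_increments(1) by blast
  show "partial_sums N ` {t \<in> increments_summing_to N m. \<forall>i<N. 0 < t i} \<subseteq> renewal_paths N m"
  proof clarify
    fix t assume t: "t \<in> increments_summing_to N m" "\<forall>i<N. 0 < t i"
    have "(\<Sum>j<i. t j) \<le> m" if "i \<le> N" for i
      using t sum_mono2[of "{..<N}" "{..<i}" t] that unfolding increments_summing_to_def by auto
    then show "partial_sums N t \<in> renewal_paths N m"
      using t unfolding renewal_paths_def partial_sums_def increments_summing_to_def by (auto simp: PiE_def)
  qed
  show "increments N ` renewal_paths N m \<subseteq> {t \<in> increments_summing_to N m. \<forall>i<N. 0 < t i}"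
  proof (rule image_subsetI)
    fix k assume k: "k \<in> renewal_paths N m"
    have "increments N k \<in> {..<N} \<rightarrow>\<^sub>E UNIV" unfolding increments_def by simp
    moreover have "\<forall>i<N. 0 < increments N k i" using k unfolding increments_def renewal_paths_def by auto
    ultimately show "increments N k \<in> {t \<in> increments_summing_to N m. \<forall>i<N. 0 < t i}"
      using partial_sums_increments(2)[OF k] unfolding increments_summing_to_def by simp
  qed
qed

lemma renewal_integrand_eq_path:
  assumes "t \<in> increments_summing_to N m"
  shows "renewal_integrand K z \<beta> \<omega> N t =
    z ^ m * (path_weight K N (partial_sums N t) * exp (\<beta> * path_disorder \<omega> N (partial_sums N t)))"
proof -
  have "path_weight K N (partial_sums N t) = (\<Prod>i<N. K (t i))"
    unfolding path_weight_def partial_sums_def by (simp add: prod.atLeast1_atMost_eq)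
  moreover have "path_disorder \<omega> N (partial_sums N t) = (\<Sum>i<N. \<omega> (\<Sum>j<i. t j))"
    unfolding path_disorder_def partial_sums_def by (simp add: sum.atLeast1_atMost_eq)
  ultimately show ?thesis
    using assms unfolding renewal_integrand_def increments_summing_to_def by simp
qed

lemma sum_increments_summing_to:
  assumes K0: "K 0 = 0"
  shows "(\<Sum>t\<in>increments_summing_to N m. renewal_integrand K z \<beta> \<omega> N t) = z ^ m * pinned_partition K \<beta> \<omega> N m"
proof -
  define Pos where "Pos = {t \<in> increments_summing_to N m. \<forall>i<N. 0 < t i}"
  have "(\<Sum>t\<in>increments_summing_to N m. renewal_integrand K z \<beta> \<omega> N t) = (\<Sum>t\<in>Pos. renewal_integrand K z \<beta> \<omega> N t)"
  proof (rule sum.mono_neutral_right[OF finite_increments_summing_to])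
    show "Pos \<subseteq> increments_summing_to N m" unfolding Pos_def by auto
    show "\<forall>t\<in>increments_summing_to N m - Pos. renewal_integrand K z \<beta> \<omega> N t = 0"
    proof
      fix t assume "t \<in> increments_summing_to N m - Pos"
      then obtain i where "i < N" "t i = 0" unfolding Pos_def by auto
      then have "(\<Prod>i<N. K (t i)) = 0" using K0 by (intro prod_zero) (auto intro!: bexI[of _ i])
      then show "renewal_integrand K z \<beta> \<omega> N t = 0" unfolding renewal_integrand_def by simp
    qed
  qed
  also have "\<dots> = (\<Sum>t\<in>Pos. z ^ m * (path_weight K N (partial_sums N t) * exp (\<beta> * path_disorder \<omega> N (partial_sums N t))))"
    by (intro sum.cong refl renewal_integrand_eq_path) (simp add: Pos_def)
  also have "\<dots> = (\<Sum>k\<in>renewal_paths N m. z ^ m * (path_weight K N k * exp (\<beta> * path_disorder \<omega> N k)))"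
    unfolding Pos_def by (rule sum.reindex_bij_betw[OF bij_betw_partial_sums])
  also have "\<dots> = z ^ m * pinned_partition K \<beta> \<omega> N m"
    unfolding pinned_partition_def by (simp add: sum_distrib_left)
  finally show ?thesis .
qed

lemma renewal_E_eq_suminf_pinned:
  assumes K0: "K 0 = 0" and K: "\<And>n. K n \<ge> 0" and z: "z \<ge> 0"
  shows "renewal_E K z \<beta> \<omega> N = (\<Sum>m. ennreal (z ^ m * pinned_partition K \<beta> \<omega> N m))"
proof -
  define A where "A = {..<N} \<rightarrow>\<^sub>E (UNIV::nat set)"
  define g where "g = (\<lambda>t. ennreal (renewal_integrand K z \<beta> \<omega> N t))"
  have "renewal_E K z \<beta> \<omega> N = (\<integral>\<^sup>+ t. g t \<partial>count_space A)"
    unfolding renewal_E_def renewal_integrand_def A_def g_def ..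
  also have "\<dots> = (\<integral>\<^sup>+ t. (\<Sum>m. g t * indicator (increments_summing_to N m) t) \<partial>count_space A)"
  proof (intro nn_integral_cong)
    fix t assume "t \<in> space (count_space A)"
    then have "t \<in> increments_summing_to N m \<longleftrightarrow> m = (\<Sum>i<N. t i)" for m
      unfolding increments_summing_to_def A_def by auto
    then have "(\<lambda>m. g t * indicator (increments_summing_to N m) t) = (\<lambda>m. if m = (\<Sum>i<N. t i) then g t else 0)"
      by (intro ext) (simp add: indicator_def)
    then show "g t = (\<Sum>m. g t * indicator (increments_summing_to N m) t)"
      using sums_single[of "\<Sum>i<N. t i" "\<lambda>_. g t"] by (simp add: sums_iff)
  qed
  also have "\<dots> = (\<Sum>m. \<integral>\<^sup>+ t. g t * indicator (increments_summing_to N m) t \<partial>count_space A)"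
    by (rule nn_integral_suminf) simp
  also have "\<dots> = (\<Sum>m. ennreal (z ^ m * pinned_partition K \<beta> \<omega> N m))"
  proof (intro suminf_cong)
    fix m
    have sub: "increments_summing_to N m \<subseteq> A" unfolding increments_summing_to_def A_def by auto
    have "(\<integral>\<^sup>+ t. g t * indicator (increments_summing_to N m) t \<partial>count_space A)
        = (\<Sum>t\<in>increments_summing_to N m. g t)"
      using sub by (simp add: nn_integral_indicator_finite finite_increments_summing_to subset_eq)
    also have "\<dots> = ennreal (\<Sum>t\<in>increments_summing_to N m. renewal_integrand K z \<beta> \<omega> N t)"
      unfolding g_def by (rule sum_ennreal) (use renewal_integrand_nonneg[OF K z] in auto)
    finally show "(\<integral>\<^sup>+ t. g t * indicator (increments_summing_to N m) t \<partial>count_space A)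
        = ennreal (z ^ m * pinned_partition K \<beta> \<omega> N m)"
      using sum_increments_summing_to[of K, OF K0] by simp
  qed
  finally show ?thesis .
qed

lemma le_1_of_sums_1:
  assumes "\<And>n. K n \<ge> 0" "K sums 1"
  shows "K n \<le> (1::real)"
  using sum_le_suminf[of K "{n}"] assms by (simp add: sums_iff)

lemma Zpart_le_exp_mult_Zpart:
  assumes K: "\<And>n. K n \<ge> 0" and S: "(\<Sum>j<n. \<bar>\<omega> j\<bar>) \<le> S"
  shows "Zpart K \<beta> h \<omega> n \<le> exp (\<bar>\<beta> - \<beta>'\<bar> * S + \<bar>h - h'\<bar> * n) * Zpart K \<beta>' h' \<omega> n"
proof -
  define D where "D = \<bar>\<beta> - \<beta>'\<bar> * S + \<bar>h - h'\<bar> * n"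
  have "path_weight K N k * exp (\<beta> * path_disorder \<omega> N k - h * N)
      \<le> exp D * (path_weight K N k * exp (\<beta>' * path_disorder \<omega> N k - h' * N))"
    if N: "N \<in> {1..n}" and k: "k \<in> renewal_paths N n" for N k
  proof -
    have "\<bar>path_disorder \<omega> N k\<bar> \<le> (\<Sum>i\<in>{1..N}. \<bar>\<omega> (k (i - 1))\<bar>)"
      unfolding path_disorder_def by (rule sum_abs)
    also have "\<dots> \<le> S" using renewal_path_sum_le[OF k, of "\<lambda>j. \<bar>\<omega> j\<bar>"] S by simp
    finally have "\<bar>path_disorder \<omega> N k\<bar> \<le> S" .
    then have "(\<beta> - \<beta>') * path_disorder \<omega> N k \<le> \<bar>\<beta> - \<beta>'\<bar> * S"
      using abs_ge_self[of "(\<beta> - \<beta>') * path_disorder \<omega> N k"]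
        mult_left_mono[of "\<bar>path_disorder \<omega> N k\<bar>" S "\<bar>\<beta> - \<beta>'\<bar>"]
      unfolding abs_mult by linarith
    then have "\<beta> * path_disorder \<omega> N k - \<beta>' * path_disorder \<omega> N k \<le> \<bar>\<beta> - \<beta>'\<bar> * S"
      by (simp add: left_diff_distrib)
    moreover have "h' * N - h * N \<le> \<bar>h - h'\<bar> * n"
    proof -
      have "h' * N - h * N \<le> \<bar>h - h'\<bar> * N"
        using mult_right_mono[of "h' - h" "\<bar>h - h'\<bar>" "real N"] by (simp add: left_diff_distrib)
      also have "\<dots> \<le> \<bar>h - h'\<bar> * n" using N by (intro mult_left_mono) auto
      finally show ?thesis .
    qed
    ultimately have "\<beta> * path_disorder \<omega> N k - h * N \<le> D + (\<beta>' * path_disorder \<omega> N k - h' * N)"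
      unfolding D_def by linarith
    then have "exp (\<beta> * path_disorder \<omega> N k - h * N) \<le> exp D * exp (\<beta>' * path_disorder \<omega> N k - h' * N)"
      by (simp add: exp_add[symmetric])
    then have "path_weight K N k * exp (\<beta> * path_disorder \<omega> N k - h * N)
        \<le> path_weight K N k * (exp D * exp (\<beta>' * path_disorder \<omega> N k - h' * N))"
      by (rule mult_left_mono) (rule path_weight_nonneg[OF K])
    then show ?thesis by (simp add: mult_ac)
  qed
  then have "Zpart K \<beta> h \<omega> n \<le> (\<Sum>N\<in>{1..n}. \<Sum>k\<in>renewal_paths N n.
      exp D * (path_weight K N k * exp (\<beta>' * path_disorder \<omega> N k - h' * N)))"
    unfolding Zpart_eq_sum_paths by (intro sum_mono) blast
  also have "\<dots> = exp D * Zpart K \<beta>' h' \<omega> n"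
    unfolding Zpart_eq_sum_paths by (simp add: sum_distrib_left)
  finally show ?thesis unfolding D_def .
qed

lemma pinned_partition_le:
  assumes K: "\<And>n. K n \<ge> 0" "\<And>n. K n \<le> 1" and \<beta>: "\<beta> \<ge> 0"
    and \<omega>: "\<And>j. \<bar>\<omega> j\<bar> \<le> A + 2 * ln (real j + 1)"
  shows "pinned_partition K \<beta> \<omega> N n \<le> (real n + 1) ^ (N + 1) * exp (\<beta> * N * (A + 2 * ln (real n + 1)))"
proof -
  define B where "B = exp (\<beta> * N * (A + 2 * ln (real n + 1)))"
  have "path_weight K N k * exp (\<beta> * path_disorder \<omega> N k) \<le> B" if k: "k \<in> renewal_paths N n" for k
  proof -
    have "\<bar>\<omega> (k (i - 1))\<bar> \<le> A + 2 * ln (real n + 1)" if "i \<in> {1..N}" for i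
    proof -
      have "k (i - 1) \<le> n" using k that unfolding renewal_paths_def by (auto simp: PiE_def Pi_def)
      then have "ln (real (k (i - 1)) + 1) \<le> ln (real n + 1)" by simp
      then show ?thesis using \<omega>[of "k (i - 1)"] by linarith
    qed
    then have "(\<Sum>i\<in>{1..N}. \<bar>\<omega> (k (i - 1))\<bar>) \<le> N * (A + 2 * ln (real n + 1))"
      using sum_mono[of "{1..N}" "\<lambda>i. \<bar>\<omega> (k (i - 1))\<bar>" "\<lambda>_. A + 2 * ln (real n + 1)"] by simp
    then have "path_disorder \<omega> N k \<le> N * (A + 2 * ln (real n + 1))"
      unfolding path_disorder_def using sum_abs[of "\<lambda>i. \<omega> (k (i - 1))" "{1..N}"] by linarith
    then have "\<beta> * path_disorder \<omega> N k \<le> \<beta> * (N * (A + 2 * ln (real n + 1)))"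
      using \<beta> by (rule mult_left_mono)
    then have "exp (\<beta> * path_disorder \<omega> N k) \<le> B" unfolding B_def by (simp add: mult.assoc)
    moreover have "path_weight K N k * exp (\<beta> * path_disorder \<omega> N k) \<le> 1 * exp (\<beta> * path_disorder \<omega> N k)"
      using path_weight_le_1[OF K] by (intro mult_right_mono) auto
    ultimately show ?thesis by linarith
  qed
  then have "pinned_partition K \<beta> \<omega> N n \<le> (\<Sum>k\<in>renewal_paths N n. B)"
    unfolding pinned_partition_def by (rule sum_mono)
  also have "\<dots> = card (renewal_paths N n) * B" by simp
  also have "\<dots> \<le> (real n + 1) ^ (N + 1) * B"
  proof (rule mult_right_mono)
    have "real (card (renewal_paths N n)) \<le> real ((n + 1) ^ (N + 1))"
      using card_renewal_paths_le[of N n] by (simp only: of_nat_le_iff)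
    then show "real (card (renewal_paths N n)) \<le> (real n + 1) ^ (N + 1)"
      by (simp only: of_nat_power of_nat_add of_nat_1)
  qed (simp add: B_def)
  finally show ?thesis unfolding B_def .
qed

lemma integrable_exp_abs:
  assumes "sets \<mu>0 = sets borel" and mgf: "\<And>l. integrable \<mu>0 (\<lambda>x. exp (l * x))"
  shows "integrable \<mu>0 (\<lambda>x. exp \<bar>x::real\<bar>)"
proof (rule Bochner_Integration.integrable_bound)
  show "integrable \<mu>0 (\<lambda>x. exp (1 * x) + exp ((-1) * x))"
    by (rule Bochner_Integration.integrable_add[OF mgf[of 1] mgf[of "-1"]])
  note assms(1)[measurable_cong]
  show "(\<lambda>x. exp \<bar>x\<bar>) \<in> borel_measurable \<mu>0" by measurable
  show "AE x in \<mu>0. norm (exp \<bar>x\<bar>) \<le> norm (exp (1 * x) + exp ((-1) * x))"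
  proof (intro AE_I2)
    fix x :: real
    have "0 < exp x" "0 < exp (-x)" by auto
    then show "norm (exp \<bar>x\<bar>) \<le> norm (exp (1 * x) + exp ((-1) * x))"
      by (cases "x < 0") auto
  qed
qed

lemma integral_exp_abs_ge_1:
  assumes "prob_space \<mu>0" "sets \<mu>0 = sets borel" "\<And>l. integrable \<mu>0 (\<lambda>x. exp (l * x))"
  shows "(\<integral>x. exp \<bar>x::real\<bar> \<partial>\<mu>0) \<ge> 1"
proof -
  interpret prob_space \<mu>0 by fact
  have "(\<integral>x. 1 \<partial>\<mu>0) \<le> (\<integral>x. exp \<bar>x\<bar> \<partial>\<mu>0)"
    by (intro integral_mono integrable_exp_abs[OF assms(2,3)]) auto
  then show ?thesis by (simp add: prob_space)
qed

text \<open>Exponential Markov inequality; the product measure factorises the moment.\<close>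
lemma measure_sum_abs_greater_le:
  fixes \<mu>0 :: "real measure"
  assumes \<mu>0: "prob_space \<mu>0" and sets: "sets \<mu>0 = sets borel"
    and mgf: "\<And>l. integrable \<mu>0 (\<lambda>x. exp (l * x))" and J: "finite J"
  shows "measure (PiM UNIV (\<lambda>_::nat. \<mu>0)) {\<omega> \<in> space (PiM UNIV (\<lambda>_::nat. \<mu>0)). a < (\<Sum>k\<in>J. \<bar>\<omega> k\<bar>)}
     \<le> exp (- a) * (\<integral>x. exp \<bar>x\<bar> \<partial>\<mu>0) ^ card J"
proof -
  interpret M0: prob_space \<mu>0 by (rule \<mu>0)
  interpret P: product_prob_space "\<lambda>_::nat. \<mu>0" UNIV by unfold_locales
  note sets[measurable_cong]
  define P where "P = PiM UNIV (\<lambda>_::nat. \<mu>0)"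
  define S where "S = {\<omega> \<in> space P. a < (\<Sum>k\<in>J. \<bar>\<omega> k\<bar>)}"
  define M where "M = (\<integral>x. exp \<bar>x\<bar> \<partial>\<mu>0)"
  have "M \<ge> 0" unfolding M_def by (intro integral_nonneg_AE) auto
  have M: "(\<integral>\<^sup>+ x. ennreal (exp \<bar>x\<bar>) \<partial>\<mu>0) = ennreal M"
    unfolding M_def by (rule nn_integral_eq_integral[OF integrable_exp_abs[OF sets mgf]]) auto
  have "S \<in> sets P" unfolding S_def P_def by measurable
  then have "emeasure P S * ennreal (exp a) = (\<integral>\<^sup>+ \<omega>. ennreal (exp a) * indicator S \<omega> \<partial>P)"
    by (simp add: nn_integral_cmult_indicator mult.commute)
  also have "\<dots> \<le> (\<integral>\<^sup>+ \<omega>. ennreal (exp (\<Sum>k\<in>J. \<bar>\<omega> k\<bar>)) \<partial>P)"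
    by (intro nn_integral_mono) (auto simp: S_def indicator_def)
  also have "\<dots> = (\<integral>\<^sup>+ \<omega>. (\<Prod>k\<in>J. ennreal (exp \<bar>restrict \<omega> J k\<bar>)) \<partial>P)"
    by (intro nn_integral_cong) (simp add: exp_sum prod_ennreal J)
  also have "\<dots> = (\<integral>\<^sup>+ x. (\<Prod>k\<in>J. ennreal (exp \<bar>x k\<bar>)) \<partial>distr P (PiM J (\<lambda>_. \<mu>0)) (\<lambda>\<omega>. restrict \<omega> J))"
    unfolding P_def by (rule nn_integral_distr[symmetric]) measurable
  also have "\<dots> = (\<integral>\<^sup>+ x. (\<Prod>k\<in>J. ennreal (exp \<bar>x k\<bar>)) \<partial>PiM J (\<lambda>_. \<mu>0))"
    unfolding P_def using J by (simp add: P.distr_PiM_restrict_finite)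
  also have "\<dots> = (\<Prod>k\<in>J. \<integral>\<^sup>+ x. ennreal (exp \<bar>x\<bar>) \<partial>\<mu>0)"
    by (rule P.product_nn_integral_prod[OF J]) measurable
  also have "\<dots> = ennreal (M ^ card J)"
    using M \<open>M \<ge> 0\<close> by (simp add: ennreal_power)
  finally have "emeasure P S * ennreal (exp a) \<le> ennreal (M ^ card J)" .
  moreover have "emeasure P S = ennreal (measure P S)"
    unfolding P_def by (simp add: P.emeasure_eq_measure)
  ultimately have "measure P S * exp a \<le> M ^ card J"
    using \<open>M \<ge> 0\<close> by (simp add: ennreal_mult'[symmetric] ennreal_le_iff)
  then show ?thesis unfolding S_def P_def M_def by (simp add: exp_minus field_simps)
qed

lemma AE_eventually_sum_abs_le:
  fixes \<mu>0 :: "real measure"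
  assumes \<mu>0: "prob_space \<mu>0" and sets: "sets \<mu>0 = sets borel"
    and mgf: "\<And>l. integrable \<mu>0 (\<lambda>x. exp (l * x))" and J: "\<And>n. finite (J n)"
    and summable: "summable (\<lambda>n. exp (- a n) * (\<integral>x. exp \<bar>x\<bar> \<partial>\<mu>0) ^ card (J n))"
  shows "AE \<omega> in PiM UNIV (\<lambda>_::nat. \<mu>0). eventually (\<lambda>n. (\<Sum>k\<in>J n. \<bar>\<omega> k\<bar>) \<le> a n) sequentially"
proof -
  interpret M0: prob_space \<mu>0 by (rule \<mu>0)
  interpret P: product_prob_space "\<lambda>_::nat. \<mu>0" UNIV by unfold_locales
  note sets[measurable_cong]
  define P where "P = PiM UNIV (\<lambda>_::nat. \<mu>0)"
  define A where "A n = {\<omega> \<in> space P. a n < (\<Sum>k\<in>J n. \<bar>\<omega> k\<bar>)}" for n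
  have "A n \<in> sets P" for n unfolding A_def P_def by measurable
  moreover have "emeasure P (A n) < \<infinity>" for n
    unfolding P_def using P.P.emeasure_finite[of "A n"] by (simp add: less_top[symmetric])
  moreover have "summable (\<lambda>n. measure P (A n))"
    by (rule summable_comparison_test'[OF summable])
      (simp add: A_def P_def measure_sum_abs_greater_le[OF \<mu>0 sets mgf J])
  ultimately have "AE \<omega> in P. eventually (\<lambda>n. \<omega> \<in> space P - A n) sequentially"
    by (rule borel_cantelli_AE1)
  then show ?thesis unfolding P_def[symmetric]
    by (rule eventually_mono) (auto elim!: eventually_mono simp: A_def not_less)
qed

lemma AE_sum_abs_le_linear:
  fixes \<mu>0 :: "real measure"
  assumes \<mu>0: "prob_space \<mu>0" and sets: "sets \<mu>0 = sets borel"
    and mgf: "\<And>l. integrable \<mu>0 (\<lambda>x. exp (l * x))"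
  obtains C :: real where "C > 0"
    "AE \<omega> in PiM UNIV (\<lambda>_::nat. \<mu>0). eventually (\<lambda>n. (\<Sum>k<n. \<bar>\<omega> k\<bar>) \<le> C * real n) sequentially"
proof
  define M where "M = (\<integral>x. exp \<bar>x\<bar> \<partial>\<mu>0)"
  have M: "M \<ge> 1" unfolding M_def by (rule integral_exp_abs_ge_1[OF \<mu>0 sets mgf])
  show "ln M + 1 > 0" using M ln_ge_zero[of M] by linarith
  have "exp (- ((ln M + 1) * real n)) * M ^ card {..<n} = exp (-1) ^ n" for n
  proof -
    have "M ^ n = exp (real n * ln M)" using M by (simp add: exp_of_nat_mult)
    then have "exp (- ((ln M + 1) * real n)) * M ^ n = exp (real n * (-1))"
      by (simp add: exp_add[symmetric] algebra_simps)
    then show ?thesis by (simp add: exp_of_nat_mult[symmetric])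
  qed
  then have "summable (\<lambda>n. exp (- ((ln M + 1) * real n)) * M ^ card {..<n})"
    by (simp add: summable_geometric)
  then show "AE \<omega> in PiM UNIV (\<lambda>_::nat. \<mu>0). eventually (\<lambda>n. (\<Sum>k<n. \<bar>\<omega> k\<bar>) \<le> (ln M + 1) * real n) sequentially"
    unfolding M_def by (intro AE_eventually_sum_abs_le[OF \<mu>0 sets mgf]) auto
qed

lemma AE_abs_le_log:
  fixes \<mu>0 :: "real measure"
  assumes \<mu>0: "prob_space \<mu>0" and sets: "sets \<mu>0 = sets borel"
    and mgf: "\<And>l. integrable \<mu>0 (\<lambda>x. exp (l * x))"
  shows "AE \<omega> in PiM UNIV (\<lambda>_::nat. \<mu>0). \<exists>A\<ge>0. \<forall>j. \<bar>\<omega> j\<bar> \<le> A + 2 * ln (real j + 1)"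
proof -
  define M where "M = (\<integral>x. exp \<bar>x\<bar> \<partial>\<mu>0)"
  have eq: "exp (- (2 * ln (real j + 1))) * M ^ card {j} = M * real (Suc j) powr (-2)" for j
    by (simp add: powr_def add.commute)
  have "summable (\<lambda>j. M * real (Suc j) powr (-2))"
    by (intro summable_mult) (subst summable_Suc_iff, simp add: summable_real_powr_iff)
  then have "summable (\<lambda>j. exp (- (2 * ln (real j + 1))) * M ^ card {j})"
    by (simp only: eq)
  then have "AE \<omega> in PiM UNIV (\<lambda>_::nat. \<mu>0).
      eventually (\<lambda>j. (\<Sum>k\<in>{j}. \<bar>\<omega> k\<bar>) \<le> 2 * ln (real j + 1)) sequentially"
    unfolding M_def by (intro AE_eventually_sum_abs_le[OF \<mu>0 sets mgf]) auto
  then show ?thesis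
  proof (rule eventually_mono)
    fix \<omega> :: "nat \<Rightarrow> real"
    assume "eventually (\<lambda>j. (\<Sum>k\<in>{j}. \<bar>\<omega> k\<bar>) \<le> 2 * ln (real j + 1)) sequentially"
    then obtain j0 where j0: "\<And>j. j \<ge> j0 \<Longrightarrow> \<bar>\<omega> j\<bar> \<le> 2 * ln (real j + 1)"
      unfolding eventually_sequentially by auto
    define A where "A = (\<Sum>j<j0. \<bar>\<omega> j\<bar>)"
    have "A \<ge> 0" unfolding A_def by (intro sum_nonneg) auto
    have "\<bar>\<omega> j\<bar> \<le> A + 2 * ln (real j + 1)" for j
    proof (cases "j < j0")
      case True
      then have "\<bar>\<omega> j\<bar> \<le> A" unfolding A_def by (intro member_le_sum[where f = "\<lambda>j. \<bar>\<omega> j\<bar>"]) auto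
      moreover have "0 \<le> ln (real j + 1)" by simp
      ultimately show ?thesis by linarith
    next
      case False
      then show ?thesis using j0[of j] \<open>A \<ge> 0\<close> by simp
    qed
    with \<open>A \<ge> 0\<close> show "\<exists>A\<ge>0. \<forall>j. \<bar>\<omega> j\<bar> \<le> A + 2 * ln (real j + 1)" by blast
  qed
qed

definition free_energy_n :: "(nat \<Rightarrow> real) \<Rightarrow> real \<Rightarrow> real \<Rightarrow> (nat \<Rightarrow> real) \<Rightarrow> nat \<Rightarrow> real" where
  "free_energy_n K \<beta> h \<omega> n = ln (Zpart K \<beta> h \<omega> n) / real n"

lemma tendsto_ln_div_of_ln_ratio:
  assumes "(\<lambda>n. ln (K n) / ln (real n)) \<longlonglongrightarrow> L"
  shows "(\<lambda>n. ln (K n) / real n) \<longlonglongrightarrow> 0"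
proof -
  have "(\<lambda>n. ln (real n) / real n) \<longlonglongrightarrow> 0" by real_asymp
  with assms have "(\<lambda>n. ln (K n) / ln (real n) * (ln (real n) / real n)) \<longlonglongrightarrow> L * 0"
    by (rule tendsto_mult)
  moreover have "eventually (\<lambda>n. ln (K n) / ln (real n) * (ln (real n) / real n) = ln (K n) / real n) sequentially"
    using eventually_ge_at_top[of 2] by eventually_elim simp
  ultimately show ?thesis by (simp add: Lim_transform_eventually)
qed

lemma limit_le_of_eventually_le:
  assumes "(\<lambda>n. ln (Z n) / real n) \<longlonglongrightarrow> c"
    and "eventually (\<lambda>n. 0 < Z n \<and> Z n \<le> exp (a + b * ln (real n + 1) + r * real n)) sequentially"
  shows "c \<le> r"
proof (rule tendsto_le[OF sequentially_bot _ assms(1)])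
  have "(\<lambda>n. ln (real n + 1) / real n) \<longlonglongrightarrow> 0" by real_asymp
  then have "(\<lambda>n. a / real n + b * (ln (real n + 1) / real n) + r) \<longlonglongrightarrow> 0 + b * 0 + r"
    by (intro tendsto_intros lim_const_over_n)
  then show "(\<lambda>n. a / real n + b * (ln (real n + 1) / real n) + r) \<longlonglongrightarrow> r" by simp
  show "eventually (\<lambda>n. ln (Z n) / real n \<le> a / real n + b * (ln (real n + 1) / real n) + r) sequentially"
    using assms(2) eventually_ge_at_top[of 1]
  proof eventually_elim
    case (elim n)
    then have "ln (Z n) \<le> ln (exp (a + b * ln (real n + 1) + r * real n))"
      by (subst ln_le_cancel_iff) auto
    then have "ln (Z n) / real n \<le> (a + b * ln (real n + 1) + r * real n) / real n"
      by (intro divide_right_mono) auto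
    also have "\<dots> = a / real n + b * (ln (real n + 1) / real n) + r"
      using elim by (simp add: field_simps)
    finally show ?case .
  qed
qed

lemma free_energy_limit_nonneg:
  assumes K: "\<And>n. K n \<ge> 0" and K_pos: "eventually (\<lambda>n. K n > 0) sequentially"
    and lnK: "(\<lambda>n. ln (K n) / real n) \<longlonglongrightarrow> 0"
    and lim: "(\<lambda>n. free_energy_n K \<beta> h \<omega> n) \<longlonglongrightarrow> c"
  shows "c \<ge> 0"
proof (rule tendsto_le[OF sequentially_bot lim])
  have "(\<lambda>n. ln (K n) / real n + (\<beta> * \<omega> 0 - h) / real n) \<longlonglongrightarrow> 0 + 0"
    by (intro tendsto_add lnK lim_const_over_n)
  then show "(\<lambda>n. ln (K n) / real n + (\<beta> * \<omega> 0 - h) / real n) \<longlonglongrightarrow> 0" by simp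
  show "eventually (\<lambda>n. ln (K n) / real n + (\<beta> * \<omega> 0 - h) / real n \<le> free_energy_n K \<beta> h \<omega> n) sequentially"
    using K_pos eventually_ge_at_top[of 1]
  proof eventually_elim
    case (elim n)
    have "ln (K n * exp (\<beta> * \<omega> 0 - h)) \<le> ln (Zpart K \<beta> h \<omega> n)"
      using Zpart_ge_single_jump[where K=K and \<beta>=\<beta> and \<omega>=\<omega> and h=h, OF K, of n]
        Zpart_pos[where K=K and \<beta>=\<beta> and \<omega>=\<omega> and h=h, OF K, of n] elim
      by (subst ln_le_cancel_iff) auto
    then have "ln (K n) + (\<beta> * \<omega> 0 - h) \<le> ln (Zpart K \<beta> h \<omega> n)" using elim by (simp add: ln_mult)
    then show ?case
      unfolding free_energy_n_def add_divide_distrib[symmetric] by (rule divide_right_mono) simp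
  qed
qed

lemma free_energy_n_lipschitz:
  assumes K: "\<And>n. K n \<ge> 0" and n: "1 \<le> n" "K n > 0"
    and S: "(\<Sum>j<n. \<bar>\<omega> j\<bar>) \<le> C * real n"
  shows "\<bar>free_energy_n K \<beta> h \<omega> n - free_energy_n K \<beta>' h' \<omega> n\<bar> \<le> C * \<bar>\<beta> - \<beta>'\<bar> + \<bar>h - h'\<bar>"
proof -
  define d where "d = \<bar>\<beta> - \<beta>'\<bar> * (C * real n) + \<bar>h - h'\<bar> * real n"
  have ln_le: "ln (Zpart K b1 h1 \<omega> n) \<le> d + ln (Zpart K b2 h2 \<omega> n)"
    if "\<bar>b1 - b2\<bar> = \<bar>\<beta> - \<beta>'\<bar>" "\<bar>h1 - h2\<bar> = \<bar>h - h'\<bar>" for b1 b2 h1 h2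
  proof -
    have Z: "Zpart K b1 h1 \<omega> n > 0" "Zpart K b2 h2 \<omega> n > 0"
      using Zpart_pos[where K=K, OF K n] by auto
    have "Zpart K b1 h1 \<omega> n \<le> exp d * Zpart K b2 h2 \<omega> n"
      using Zpart_le_exp_mult_Zpart[where K=K and \<beta>=b1 and \<beta>'=b2 and h=h1 and h'=h2, OF K S] that
      unfolding d_def by simp
    then have "ln (Zpart K b1 h1 \<omega> n) \<le> ln (exp d * Zpart K b2 h2 \<omega> n)"
      using Z by (subst ln_le_cancel_iff) auto
    then show ?thesis using Z by (simp add: ln_mult)
  qed
  have "\<bar>ln (Zpart K \<beta> h \<omega> n) - ln (Zpart K \<beta>' h' \<omega> n)\<bar> \<le> d"
    using ln_le[of \<beta> \<beta>' h h'] ln_le[of \<beta>' \<beta> h' h] by (simp add: abs_minus_commute)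
  also have "d = real n * (C * \<bar>\<beta> - \<beta>'\<bar> + \<bar>h - h'\<bar>)" unfolding d_def by (simp add: algebra_simps)
  finally show ?thesis
    unfolding free_energy_n_def using n
    by (simp add: diff_divide_distrib[symmetric] divide_le_eq mult.commute)
qed

text \<open>Uniform Lipschitz continuity in (\<beta>, h) lets convergence of the free energy on a rational
  grid, for two disorder sequences with the same limits there, pass to every parameter.\<close>
lemma free_energy_n_tendsto_transfer:
  assumes K: "\<And>n. K n \<ge> 0" and K_pos: "eventually (\<lambda>n. K n > 0) sequentially" and C: "C \<ge> 0"
    and S: "eventually (\<lambda>n. (\<Sum>j<n. \<bar>\<omega> j\<bar>) \<le> C * real n) sequentially"
    and S': "eventually (\<lambda>n. (\<Sum>j<n. \<bar>\<omega>' j\<bar>) \<le> C * real n) sequentially"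
    and grid: "\<And>q r. q \<in> \<rat> \<Longrightarrow> 0 \<le> q \<Longrightarrow> r \<in> \<rat> \<Longrightarrow>
        \<exists>d. (\<lambda>n. free_energy_n K q r \<omega> n) \<longlonglongrightarrow> d \<and> (\<lambda>n. free_energy_n K q r \<omega>' n) \<longlonglongrightarrow> d"
    and \<beta>: "\<beta> \<ge> 0" and lim': "(\<lambda>n. free_energy_n K \<beta> h \<omega>' n) \<longlonglongrightarrow> c"
  shows "(\<lambda>n. free_energy_n K \<beta> h \<omega> n) \<longlonglongrightarrow> c"
proof (rule tendstoI)
  fix e :: real assume e: "e > 0"
  define \<delta> where "\<delta> = e / (5 * (C + 1))"
  have \<delta>: "\<delta> > 0" unfolding \<delta>_def using e C by auto
  obtain q where q: "q \<in> \<rat>" "\<beta> < q" "q < \<beta> + \<delta>" using Rats_dense_in_real[of \<beta> "\<beta> + \<delta>"] \<delta> by auto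
  obtain r where r: "r \<in> \<rat>" "h < r" "r < h + \<delta>" using Rats_dense_in_real[of h "h + \<delta>"] \<delta> by auto
  obtain d where d: "(\<lambda>n. free_energy_n K q r \<omega> n) \<longlonglongrightarrow> d" and d': "(\<lambda>n. free_energy_n K q r \<omega>' n) \<longlonglongrightarrow> d"
    using grid[OF q(1) _ r(1)] q \<beta> by force
  have "C * \<bar>\<beta> - q\<bar> + \<bar>h - r\<bar> \<le> (C + 1) * \<delta>"
    using q r C mult_left_mono[of "\<bar>\<beta> - q\<bar>" \<delta> C] by (simp add: algebra_simps)
  also have "(C + 1) * \<delta> = e / 5" unfolding \<delta>_def using C by (simp add: divide_simps)
  finally have lip: "C * \<bar>\<beta> - q\<bar> + \<bar>h - r\<bar> \<le> e / 5" .
  have "e / 5 > 0" using e by simp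
  from K_pos eventually_ge_at_top[of 1] S S' tendstoD[OF d this] tendstoD[OF d' this] tendstoD[OF lim' this]
  show "eventually (\<lambda>n. dist (free_energy_n K \<beta> h \<omega> n) c < e) sequentially"
  proof eventually_elim
    case (elim n)
    have "\<bar>free_energy_n K \<beta> h \<omega> n - free_energy_n K q r \<omega> n\<bar> \<le> C * \<bar>\<beta> - q\<bar> + \<bar>h - r\<bar>"
      "\<bar>free_energy_n K \<beta> h \<omega>' n - free_energy_n K q r \<omega>' n\<bar> \<le> C * \<bar>\<beta> - q\<bar> + \<bar>h - r\<bar>"
      using elim by (intro free_energy_n_lipschitz[OF K]; simp)+
    then show ?case using elim lip unfolding dist_real_def by linarith
  qed
qed

lemma ln_enn_mono: "x \<le> y \<Longrightarrow> ln_enn x \<le> ln_enn y"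
  unfolding ln_enn_def
  by (cases x rule: ennreal_cases; cases y rule: ennreal_cases) (auto simp: top_unique)

lemma less_exp_of_scaled_ln_enn_less:
  assumes N: "1 \<le> N" and less: "ereal (1 / real N) * ln_enn E < ereal h"
  shows "E < ennreal (exp (h * real N))"
proof (cases E rule: ennreal_cases)
  case (real r)
  show ?thesis
  proof (cases "r = 0")
    case False
    with real have "r > 0" "ln_enn E = ereal (ln r)" unfolding ln_enn_def by auto
    then have "ln r < ln (exp (h * real N))" using less N by (simp add: divide_less_eq)
    then have "r < exp (h * real N)" using \<open>r > 0\<close> by (subst (asm) ln_less_cancel_iff) auto
    then show ?thesis using real \<open>r > 0\<close> by (simp add: ennreal_lessI)
  qed (use real in simp)
qed (use less N in \<open>simp add: ln_enn_def\<close>)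

lemma scaled_ln_enn_le_of_le_exp:
  assumes N: "1 \<le> N" and le: "E \<le> ennreal (exp (h * real N))"
  shows "ereal (1 / real N) * ln_enn E \<le> ereal h"
proof -
  have "ln_enn E \<le> ln_enn (ennreal (exp (h * real N)))" using le by (rule ln_enn_mono)
  also have "\<dots> = ereal (h * real N)" by (simp add: ln_enn_def)
  finally have "ereal (1 / real N) * ln_enn E \<le> ereal (1 / real N) * ereal (h * real N)"
    by (rule ereal_mult_left_mono) simp
  then show ?thesis using N by simp
qed

lemma renewal_E_mono:
  assumes K: "\<And>n. K n \<ge> 0" and z: "0 \<le> z" "z \<le> z'"
  shows "renewal_E K z \<beta> \<omega> N \<le> renewal_E K z' \<beta> \<omega> N"
  unfolding renewal_E_def
proof (intro nn_integral_mono ennreal_leI)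
  fix t :: "nat \<Rightarrow> nat"
  have "z ^ (\<Sum>i<N. t i) \<le> z' ^ (\<Sum>i<N. t i)" using z by (intro power_mono) auto
  then show "(\<Prod>i<N. K (t i)) * z ^ (\<Sum>i<N. t i) * exp (\<beta> * (\<Sum>i<N. \<omega> (\<Sum>j<i. t j)))
    \<le> (\<Prod>i<N. K (t i)) * z' ^ (\<Sum>i<N. t i) * exp (\<beta> * (\<Sum>i<N. \<omega> (\<Sum>j<i. t j)))"
    using K by (intro mult_right_mono mult_left_mono prod_nonneg) auto
qed

lemma S_que_mono:
  assumes K: "\<And>n. K n \<ge> 0" and z: "0 \<le> z" "z \<le> z'"
  shows "S_que K \<beta> z \<omega> \<le> S_que K \<beta> z' \<omega>"
  unfolding S_que_def
  by (intro Limsup_mono always_eventually allI ereal_mult_left_mono ln_enn_mono renewal_E_mono[OF K z]) auto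

lemma S_que_left_eq_SUP:
  assumes K: "\<And>n. K n \<ge> 0"
  shows "S_que_left K \<beta> \<omega> = (SUP z\<in>{0<..<1}. S_que K \<beta> z \<omega>)"
proof -
  have "((\<lambda>z. S_que K \<beta> z \<omega>) \<longlongrightarrow> (SUP z\<in>{0<..<1}. S_que K \<beta> z \<omega>)) (at_left 1)"
  proof (rule order_tendstoI)
    fix a assume "a < (SUP z\<in>{0<..<1}. S_que K \<beta> z \<omega>)"
    then obtain y where y: "0 < y" "y < 1" "a < S_que K \<beta> y \<omega>" by (auto simp: less_SUP_iff)
    have "a < S_que K \<beta> z \<omega>" if "y < z" for z
      using S_que_mono[where K=K and \<beta>=\<beta> and \<omega>=\<omega>, OF K, of y z] y that by simp
    then show "eventually (\<lambda>z. a < S_que K \<beta> z \<omega>) (at_left 1)"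
      unfolding eventually_at_left[OF \<open>y < 1\<close>] using \<open>y < 1\<close> by blast
  next
    fix a assume "(SUP z\<in>{0<..<1}. S_que K \<beta> z \<omega>) < a"
    then have "S_que K \<beta> z \<omega> < a" if "0 < z" "z < 1" for z
      using SUP_upper[of z "{0<..<1}" "\<lambda>z. S_que K \<beta> z \<omega>"] that by simp
    then show "eventually (\<lambda>z. S_que K \<beta> z \<omega> < a) (at_left 1)"
      unfolding eventually_at_left[of 0 "1::real", simplified] by (intro exI[of _ 0]) auto
  qed
  then show ?thesis unfolding S_que_left_def by (intro tendsto_Lim) auto
qed

lemma eventually_renewal_E_less_of_S_que_less:
  assumes "S_que K \<beta> z \<omega> < ereal h"
  shows "eventually (\<lambda>N. renewal_E K z \<beta> \<omega> N < ennreal (exp (h * real N))) sequentially"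
  using Limsup_lessD[OF assms[unfolded S_que_def]] eventually_ge_at_top[of 1]
  by eventually_elim (rule less_exp_of_scaled_ln_enn_less)

lemma S_que_le_of_eventually_renewal_E_le:
  assumes "eventually (\<lambda>N. renewal_E K z \<beta> \<omega> N \<le> ennreal (exp (h * real N))) sequentially"
  shows "S_que K \<beta> z \<omega> \<le> ereal h"
  unfolding S_que_def
proof (rule Limsup_bounded)
  from assms eventually_ge_at_top[of 1]
  show "eventually (\<lambda>N. ereal (1 / real N) * ln_enn (renewal_E K z \<beta> \<omega> N) \<le> ereal h) sequentially"
    by eventually_elim (rule scaled_ln_enn_le_of_le_exp)
qed

lemma pinned_partition_le_of_renewal_E_less:
  assumes K0: "K 0 = 0" and K: "\<And>n. K n \<ge> 0" and z: "z \<ge> 0"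
    and less: "renewal_E K z \<beta> \<omega> N < ennreal (exp (h * real N))"
  shows "z ^ m * pinned_partition K \<beta> \<omega> N m \<le> exp (h * real N)"
proof -
  have "ennreal (z ^ m * pinned_partition K \<beta> \<omega> N m) \<le> (\<Sum>m. ennreal (z ^ m * pinned_partition K \<beta> \<omega> N m))"
    using sum_le_suminf[OF summableI, of "{m}" "\<lambda>m. ennreal (z ^ m * pinned_partition K \<beta> \<omega> N m)"] by simp
  also have "\<dots> < ennreal (exp (h * real N))"
    using less renewal_E_eq_suminf_pinned[where K=K, OF K0 K z] by simp
  finally have "ennreal (z ^ m * pinned_partition K \<beta> \<omega> N m) < ennreal (exp (h * real N))" .
  moreover have "0 \<le> z ^ m * pinned_partition K \<beta> \<omega> N m"
    using z pinned_partition_nonneg[where K=K, OF K] by simp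
  ultimately show ?thesis by (subst (asm) ennreal_less_iff) auto
qed

lemma pinned_term_le_polynomial:
  fixes N N0 :: nat and \<beta> A h z :: real
  assumes K: "\<And>n. K n \<ge> 0" "\<And>n. K n \<le> 1" and \<beta>: "\<beta> \<ge> 0" and A: "A \<ge> 0"
    and \<omega>: "\<And>j. \<bar>\<omega> j\<bar> \<le> A + 2 * ln (real j + 1)" and z: "0 \<le> z" "z \<le> 1" and N: "N < N0"
  shows "z ^ n * exp (- h * N) * pinned_partition K \<beta> \<omega> N n
    \<le> exp ((\<bar>h\<bar> + \<beta> * A) * N0 + (1 + 2 * \<beta>) * N0 * ln (real n + 1))"
proof -
  define L where "L = ln (real n + 1)"
  have L: "L \<ge> 0" unfolding L_def by simp
  have "(real n + 1) ^ (N + 1) = exp (real (N + 1) * L)"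
    unfolding L_def exp_of_nat_mult by simp
  then have "pinned_partition K \<beta> \<omega> N n \<le> exp (real (N + 1) * L) * exp (\<beta> * N * (A + 2 * L))"
    using pinned_partition_le[where K=K, OF K \<beta> \<omega>, of N n] unfolding L_def by simp
  also have "\<dots> \<le> exp (N0 * L) * exp (\<beta> * N0 * (A + 2 * L))"
  proof (intro mult_mono)
    have "real (N + 1) \<le> real N0" using N by simp
    then show "exp (real (N + 1) * L) \<le> exp (N0 * L)" using L by (simp add: mult_right_mono)
    have "\<beta> * N \<le> \<beta> * N0" using N \<beta> by (simp add: mult_left_mono)
    then show "exp (\<beta> * N * (A + 2 * L)) \<le> exp (\<beta> * N0 * (A + 2 * L))" using L A by (simp add: mult_right_mono)
  qed auto
  finally have W: "pinned_partition K \<beta> \<omega> N n \<le> exp (N0 * L + \<beta> * N0 * (A + 2 * L))"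
    by (simp add: exp_add)
  have "- h * N \<le> \<bar>h\<bar> * N" by (intro mult_right_mono) auto
  also have "\<dots> \<le> \<bar>h\<bar> * N0" using N by (intro mult_left_mono) auto
  finally have "exp (- h * N) \<le> exp (\<bar>h\<bar> * N0)" by simp
  then have E: "exp (- h * N) * pinned_partition K \<beta> \<omega> N n \<le> exp (\<bar>h\<bar> * N0) * exp (N0 * L + \<beta> * N0 * (A + 2 * L))"
    using W pinned_partition_nonneg[where K=K, OF K(1)] by (intro mult_mono) auto
  have "z ^ n \<le> 1" using z by (rule power_le_one)
  from this E have "z ^ n * (exp (- h * N) * pinned_partition K \<beta> \<omega> N n)
      \<le> 1 * (exp (\<bar>h\<bar> * N0) * exp (N0 * L + \<beta> * N0 * (A + 2 * L)))"
    by (rule mult_mono') (use z pinned_partition_nonneg[where K=K, OF K(1)] in simp_all)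
  then show ?thesis unfolding L_def by (simp add: exp_add[symmetric] algebra_simps)
qed

text \<open>For the finitely many renewal counts N below the threshold from S_que < h the pinned terms grow
  polynomially in n (the disorder is at most logarithmic), all other terms are at most one.\<close>
lemma scaled_Zpart_le_of_S_que_less:
  assumes K0: "K 0 = 0" and K: "\<And>n. K n \<ge> 0" "\<And>n. K n \<le> 1" and \<beta>: "\<beta> \<ge> 0" and A: "A \<ge> 0"
    and \<omega>: "\<And>j. \<bar>\<omega> j\<bar> \<le> A + 2 * ln (real j + 1)" and z: "0 < z" "z < 1"
    and less: "S_que K \<beta> z \<omega> < ereal h"
  obtains a b where "\<And>n. z ^ n * Zpart K \<beta> h \<omega> n \<le> exp (a + b * ln (real n + 1))"
proof -
  obtain N0 where N0: "\<And>N. N \<ge> N0 \<Longrightarrow> renewal_E K z \<beta> \<omega> N < ennreal (exp (h * real N))"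
    using eventually_renewal_E_less_of_S_que_less[OF less] unfolding eventually_sequentially by auto
  define a where "a = (\<bar>h\<bar> + \<beta> * A) * N0"
  define b where "b = (1 + 2 * \<beta>) * N0"
  have term_le: "z ^ n * exp (- h * N) * pinned_partition K \<beta> \<omega> N n \<le> exp (a + b * ln (real n + 1)) + 1"
    for N n
  proof (cases "N < N0")
    case True
    then show ?thesis
      using pinned_term_le_polynomial[where K=K, OF K \<beta> A \<omega>, of z N N0 n h] z unfolding a_def b_def by simp
  next
    case False
    then have "z ^ n * pinned_partition K \<beta> \<omega> N n \<le> exp (h * real N)"
      using pinned_partition_le_of_renewal_E_less[where K=K, OF K0 K(1)] N0 z by simp
    then have "z ^ n * exp (- h * N) * pinned_partition K \<beta> \<omega> N n \<le> 1"
      by (simp add: exp_minus field_simps)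
    then show ?thesis using exp_gt_zero[of "a + b * ln (real n + 1)"] by linarith
  qed
  have "z ^ n * Zpart K \<beta> h \<omega> n \<le> exp (ln 2 + a + (b + 1) * ln (real n + 1))" for n
  proof -
    have "z ^ n * Zpart K \<beta> h \<omega> n = (\<Sum>N\<in>{1..n}. z ^ n * exp (- h * N) * pinned_partition K \<beta> \<omega> N n)"
      unfolding Zpart_eq_sum_pinned by (simp add: sum_distrib_left mult_ac)
    also have "\<dots> \<le> (\<Sum>N\<in>{1..n}. exp (a + b * ln (real n + 1)) + 1)"
      by (rule sum_mono) (rule term_le)
    also have "\<dots> = real n * (exp (a + b * ln (real n + 1)) + 1)" by simp
    also have "\<dots> \<le> (real n + 1) * (2 * exp (a + b * ln (real n + 1)))"
      using A \<beta> by (intro mult_mono) (auto simp: a_def b_def)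
    also have "\<dots> = exp (ln 2 + a + (b + 1) * ln (real n + 1))"
      by (simp add: exp_add algebra_simps)
    finally show ?thesis .
  qed
  then show ?thesis using that by blast
qed

lemma free_energy_limit_le_of_S_que_less:
  assumes K0: "K 0 = 0" and K: "\<And>n. K n \<ge> 0" "\<And>n. K n \<le> 1" and K_pos: "eventually (\<lambda>n. K n > 0) sequentially"
    and \<beta>: "\<beta> \<ge> 0" and A: "A \<ge> 0" and \<omega>: "\<And>j. \<bar>\<omega> j\<bar> \<le> A + 2 * ln (real j + 1)"
    and z: "0 < z" "z < 1" and less: "S_que K \<beta> z \<omega> < ereal h"
    and lim: "(\<lambda>n. free_energy_n K \<beta> h \<omega> n) \<longlonglongrightarrow> c"
  shows "c \<le> - ln z"
proof -
  obtain a b where ab: "\<And>n. z ^ n * Zpart K \<beta> h \<omega> n \<le> exp (a + b * ln (real n + 1))"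
    using scaled_Zpart_le_of_S_que_less[where K=K, OF K0 K \<beta> A \<omega> z less] by blast
  have "Zpart K \<beta> h \<omega> n \<le> exp (a + b * ln (real n + 1) + - ln z * real n)" for n
  proof -
    have "z ^ n = exp (real n * ln z)" unfolding exp_of_nat_mult using z by simp
    then have "Zpart K \<beta> h \<omega> n \<le> exp (a + b * ln (real n + 1)) / exp (real n * ln z)"
      using ab[of n] by (simp add: pos_le_divide_eq mult.commute)
    also have "\<dots> = exp (a + b * ln (real n + 1) + - ln z * real n)"
      by (simp add: exp_diff[symmetric] algebra_simps)
    finally show ?thesis .
  qed
  moreover have "eventually (\<lambda>n. 0 < Zpart K \<beta> h \<omega> n) sequentially"
    using K_pos eventually_ge_at_top[of 1] by eventually_elim (rule Zpart_pos[where K=K, OF K(1)])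
  ultimately show ?thesis
    using lim unfolding free_energy_n_def by (intro limit_le_of_eventually_le[where a=a and b=b]) auto
qed

lemma renewal_E_le_geometric:
  assumes K0: "K 0 = 0" and K: "\<And>n. K n \<ge> 0" and z: "z > 0"
    and Z: "\<And>m. m \<ge> N \<Longrightarrow> Zpart K \<beta> h \<omega> m \<le> exp (d * real m)"
    and N: "N \<ge> 1" and q: "z * exp d < 1"
  shows "renewal_E K z \<beta> \<omega> N \<le> ennreal (exp (h * N) * ((z * exp d) ^ N / (1 - z * exp d)))"
proof -
  define q where "q = z * exp d"
  define g where "g m = (if N \<le> m then exp (h * N) * q ^ m else 0)" for m
  have q0: "0 < q" unfolding q_def using z by simp
  have "(\<lambda>i. exp (h * N) * q ^ N * q ^ i) sums (exp (h * N) * q ^ N * (1 / (1 - q)))"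
    using q0 q unfolding q_def by (intro sums_mult geometric_sums) auto
  moreover have "(\<lambda>i. g (i + N)) = (\<lambda>i. exp (h * N) * q ^ N * q ^ i)"
    unfolding g_def by (auto simp: power_add mult_ac)
  ultimately have "(\<lambda>i. g (i + N)) sums (exp (h * N) * (q ^ N / (1 - q)))" by simp
  moreover have "(\<Sum>i<N. g i) = 0" unfolding g_def by simp
  ultimately have g: "g sums (exp (h * N) * (q ^ N / (1 - q)))"
    by (simp add: sums_iff_shift)
  have "z ^ m * pinned_partition K \<beta> \<omega> N m \<le> g m" for m
  proof (cases "N \<le> m")
    case True
    have "exp (- h * N) * pinned_partition K \<beta> \<omega> N m \<le> exp (d * real m)"
      using pinned_partition_le_Zpart[where K=K and h=h and \<beta>=\<beta> and \<omega>=\<omega>, OF K N True] Z[OF True]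
      by (rule order_trans)
    then have "z ^ m * pinned_partition K \<beta> \<omega> N m \<le> z ^ m * (exp (h * N) * exp (d * real m))"
      using z by (intro mult_left_mono) (simp_all add: exp_minus field_simps)
    also have "\<dots> = exp (h * N) * q ^ m"
      unfolding q_def by (simp add: power_mult_distrib exp_of_nat_mult[symmetric] mult_ac)
    finally show ?thesis unfolding g_def using True by simp
  qed (simp add: g_def pinned_partition_eq_0)
  then have "renewal_E K z \<beta> \<omega> N \<le> (\<Sum>m. ennreal (g m))"
    unfolding renewal_E_eq_suminf_pinned[where K=K, OF K0 K less_imp_le[OF z]]
    by (intro suminf_le ennreal_leI summableI)
  also have "\<dots> = ennreal (exp (h * N) * (q ^ N / (1 - q)))"
    using g q0 by (subst suminf_ennreal2) (auto simp: g_def sums_iff)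
  finally show ?thesis unfolding q_def .
qed

text \<open>If the free energy were below -ln z, the pinned partition functions would make the
  renewal expectation at most e^(hN) times a vanishing geometric factor, forcing S_que \<le> h.\<close>
lemma free_energy_limit_ge_of_S_que_greater:
  assumes K0: "K 0 = 0" and K: "\<And>n. K n \<ge> 0" and z: "0 < z" "z < 1"
    and greater: "ereal h < S_que K \<beta> z \<omega>"
    and lim: "(\<lambda>n. free_energy_n K \<beta> h \<omega> n) \<longlonglongrightarrow> c"
  shows "c \<ge> - ln z"
proof (rule ccontr)
  assume "\<not> c \<ge> - ln z"
  define d where "d = (c - ln z) / 2"
  have "c < d" "d < - ln z" using \<open>\<not> c \<ge> - ln z\<close> unfolding d_def by auto
  define q where "q = z * exp d"
  have "exp d < exp (- ln z)" using \<open>d < - ln z\<close> by simp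
  then have "q < z * (1 / z)"
    unfolding q_def using z by (intro mult_strict_left_mono) (simp_all add: exp_minus inverse_eq_divide)
  then have q: "0 < q" "q < 1" unfolding q_def using z by simp_all
  obtain n0 where n0: "\<And>n. n \<ge> n0 \<Longrightarrow> free_energy_n K \<beta> h \<omega> n < d"
    using order_tendstoD(2)[OF lim \<open>c < d\<close>] unfolding eventually_sequentially by auto
  have Z: "Zpart K \<beta> h \<omega> n \<le> exp (d * real n)" if "n \<ge> max n0 1" for n
  proof (cases "Zpart K \<beta> h \<omega> n = 0")
    case False
    then have "Zpart K \<beta> h \<omega> n > 0" using Zpart_nonneg[where K=K, OF K] by (simp add: order_less_le)
    have "ln (Zpart K \<beta> h \<omega> n) < d * real n"
      using n0[of n] that unfolding free_energy_n_def by (simp add: divide_less_eq)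
    then have "exp (ln (Zpart K \<beta> h \<omega> n)) \<le> exp (d * real n)" by simp
    then show ?thesis using \<open>Zpart K \<beta> h \<omega> n > 0\<close> by simp
  qed simp
  have "(\<lambda>N. q ^ N / (1 - q)) \<longlonglongrightarrow> 0 / (1 - q)"
    using q by (intro tendsto_divide LIMSEQ_power_zero tendsto_const) auto
  then have "eventually (\<lambda>N. q ^ N / (1 - q) < 1) sequentially"
    by (rule order_tendstoD(2)) simp
  then have "eventually (\<lambda>N. renewal_E K z \<beta> \<omega> N \<le> ennreal (exp (h * real N))) sequentially"
    using eventually_ge_at_top[of "max n0 1"]
  proof eventually_elim
    case (elim N)
    have "renewal_E K z \<beta> \<omega> N \<le> ennreal (exp (h * N) * (q ^ N / (1 - q)))"
      unfolding q_def
      by (rule renewal_E_le_geometric[where K=K, OF K0 K z(1)]) (use elim q Z in \<open>simp_all add: q_def\<close>)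
    also have "\<dots> \<le> ennreal (exp (h * N) * 1)"
      using elim by (intro ennreal_leI mult_left_mono) auto
    finally show ?case by simp
  qed
  then have "S_que K \<beta> z \<omega> \<le> ereal h" by (rule S_que_le_of_eventually_renewal_E_le)
  with greater show False by simp
qed

lemma free_energy_limit_eq_0_of_S_que_left_less:
  assumes K0: "K 0 = 0" and K: "\<And>n. K n \<ge> 0" "\<And>n. K n \<le> 1" and K_pos: "eventually (\<lambda>n. K n > 0) sequentially"
    and lnK: "(\<lambda>n. ln (K n) / real n) \<longlonglongrightarrow> 0"
    and \<beta>: "\<beta> \<ge> 0" and A: "A \<ge> 0" and \<omega>: "\<And>j. \<bar>\<omega> j\<bar> \<le> A + 2 * ln (real j + 1)"
    and lim: "(\<lambda>n. free_energy_n K \<beta> h \<omega> n) \<longlonglongrightarrow> c"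
    and less: "S_que_left K \<beta> \<omega> < ereal h"
  shows "c = 0"
proof -
  have "c \<le> 0 + e" if e: "e > 0" for e
  proof -
    have "S_que K \<beta> (exp (- e)) \<omega> \<le> S_que_left K \<beta> \<omega>"
      unfolding S_que_left_eq_SUP[where K=K, OF K(1)] using e by (intro SUP_upper) auto
    then have "c \<le> - ln (exp (- e))"
      using less e by (intro free_energy_limit_le_of_S_que_less[where K=K, OF K0 K K_pos \<beta> A \<omega> _ _ _ lim]) auto
    then show ?thesis by simp
  qed
  then have "c \<le> 0" by (rule field_le_epsilon)
  with free_energy_limit_nonneg[where K=K, OF K(1) K_pos lnK lim] show ?thesis by simp
qed

lemma free_energy_limit_pos_of_S_que_left_greater:
  assumes K0: "K 0 = 0" and K: "\<And>n. K n \<ge> 0"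
    and lim: "(\<lambda>n. free_energy_n K \<beta> h \<omega> n) \<longlonglongrightarrow> c"
    and greater: "ereal h < S_que_left K \<beta> \<omega>"
  shows "c > 0"
proof -
  obtain z where z: "0 < z" "z < 1" "ereal h < S_que K \<beta> z \<omega>"
    using greater unfolding S_que_left_eq_SUP[where K=K, OF K] by (auto simp: less_SUP_iff)
  then have "c \<ge> - ln z"
    by (intro free_energy_limit_ge_of_S_que_greater[where K=K, OF K0 K _ _ _ lim])
  moreover have "- ln z > 0" using z by simp
  ultimately show ?thesis by simp
qed

lemma AE_tendsto_f_que:
  assumes "prob_space \<mu>0"
    and "\<exists>c. AE \<omega> in (\<Pi>\<^sub>M i\<in>(UNIV::nat set). \<mu>0). (\<lambda>n. ln (Zpart K \<beta> h \<omega> n) / real n) \<longlonglongrightarrow> c"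
  shows "AE \<omega> in (\<Pi>\<^sub>M i\<in>(UNIV::nat set). \<mu>0). (\<lambda>n. free_energy_n K \<beta> h \<omega> n) \<longlonglongrightarrow> f_que \<mu>0 K \<beta> h"
proof -
  interpret M0: prob_space \<mu>0 by fact
  interpret P: product_prob_space "\<lambda>_::nat. \<mu>0" UNIV by unfold_locales
  obtain c where c: "AE \<omega> in (\<Pi>\<^sub>M i\<in>(UNIV::nat set). \<mu>0). (\<lambda>n. ln (Zpart K \<beta> h \<omega> n) / real n) \<longlonglongrightarrow> c"
    using assms(2) by blast
  have "f_que \<mu>0 K \<beta> h = c"
    unfolding f_que_def
  proof (rule the_equality)
    show "AE \<omega> in (\<Pi>\<^sub>M i\<in>(UNIV::nat set). \<mu>0). (\<lambda>n. ln (Zpart K \<beta> h \<omega> n) / real n) \<longlonglongrightarrow> c" by (rule c)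
    fix c' assume "AE \<omega> in (\<Pi>\<^sub>M i\<in>(UNIV::nat set). \<mu>0). (\<lambda>n. ln (Zpart K \<beta> h \<omega> n) / real n) \<longlonglongrightarrow> c'"
    with c have "AE \<omega> in (\<Pi>\<^sub>M i\<in>(UNIV::nat set). \<mu>0). c' = c"
      by (rule eventually_elim2) (rule LIMSEQ_unique)
    then show "c' = c" by simp
  qed
  then show ?thesis using c unfolding free_energy_n_def by simp
qed

lemma AE_free_energy_n_tendsto_f_que_rational:
  fixes \<mu>0 :: "real measure"
  assumes \<mu>0: "prob_space \<mu>0"
    and f_exists: "\<And>\<beta> h. \<beta> \<ge> 0 \<Longrightarrow> \<exists>c. AE \<omega> in (\<Pi>\<^sub>M i\<in>(UNIV::nat set). \<mu>0).
                     (\<lambda>n. ln (Zpart K \<beta> h \<omega> n) / real n) \<longlonglongrightarrow> c"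
  shows "AE \<omega> in (\<Pi>\<^sub>M i\<in>(UNIV::nat set). \<mu>0). \<forall>q\<in>\<rat>. \<forall>r\<in>\<rat>.
           0 \<le> q \<longrightarrow> (\<lambda>n. free_energy_n K q r \<omega> n) \<longlonglongrightarrow> f_que \<mu>0 K q r"
proof -
  have "AE \<omega> in (\<Pi>\<^sub>M i\<in>(UNIV::nat set). \<mu>0). \<forall>x\<in>\<rat> \<times> \<rat>.
      0 \<le> fst x \<longrightarrow> (\<lambda>n. free_energy_n K (fst x) (snd x) \<omega> n) \<longlonglongrightarrow> f_que \<mu>0 K (fst x) (snd x)"
    by (subst AE_ball_countable)
      (auto intro: countable_SIGMA countable_rat AE_tendsto_f_que[OF \<mu>0 f_exists])
  then show ?thesis by (rule eventually_mono) auto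
qed

text \<open>The exceptional null set must not depend on (\<beta>, h): take the countably many rational
  parameters and transfer to the others by Lipschitz continuity.\<close>
lemma AE_free_energy_n_tendsto_f_que:
  fixes \<mu>0 :: "real measure"
  assumes K: "\<And>n. K n \<ge> 0" and K_pos: "eventually (\<lambda>n. K n > 0) sequentially"
    and \<mu>0: "prob_space \<mu>0" and sets: "sets \<mu>0 = sets borel"
    and mgf: "\<And>l. integrable \<mu>0 (\<lambda>x. exp (l * x))"
    and f_exists: "\<And>\<beta> h. \<beta> \<ge> 0 \<Longrightarrow> \<exists>c. AE \<omega> in (\<Pi>\<^sub>M i\<in>(UNIV::nat set). \<mu>0).
                     (\<lambda>n. ln (Zpart K \<beta> h \<omega> n) / real n) \<longlonglongrightarrow> c"
  shows "AE \<omega> in (\<Pi>\<^sub>M i\<in>(UNIV::nat set). \<mu>0).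
           \<forall>\<beta>\<ge>0. \<forall>h. (\<lambda>n. free_energy_n K \<beta> h \<omega> n) \<longlonglongrightarrow> f_que \<mu>0 K \<beta> h"
proof -
  interpret M0: prob_space \<mu>0 by (rule \<mu>0)
  interpret P: product_prob_space "\<lambda>_::nat. \<mu>0" UNIV by unfold_locales
  obtain C where C: "C > 0" and S: "AE \<omega> in (\<Pi>\<^sub>M i\<in>(UNIV::nat set). \<mu>0).
      eventually (\<lambda>n. (\<Sum>k<n. \<bar>\<omega> k\<bar>) \<le> C * real n) sequentially"
    using AE_sum_abs_le_linear[OF \<mu>0 sets mgf] by blast
  define good where "good \<omega> \<longleftrightarrow> eventually (\<lambda>n. (\<Sum>k<n. \<bar>\<omega> k\<bar>) \<le> C * real n) sequentially \<and>
      (\<forall>q\<in>\<rat>. \<forall>r\<in>\<rat>. 0 \<le> q \<longrightarrow> (\<lambda>n. free_energy_n K q r \<omega> n) \<longlonglongrightarrow> f_que \<mu>0 K q r)"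
    for \<omega> :: "nat \<Rightarrow> real"
  have good: "AE \<omega> in (\<Pi>\<^sub>M i\<in>(UNIV::nat set). \<mu>0). good \<omega>"
    using S AE_free_energy_n_tendsto_f_que_rational[OF \<mu>0 f_exists] unfolding good_def
    by (rule eventually_conj)
  show ?thesis
  proof (rule eventually_mono[OF good], intro allI impI)
    fix \<omega> :: "nat \<Rightarrow> real" and \<beta> h :: real
    assume "good \<omega>" and \<beta>: "\<beta> \<ge> 0"
    obtain \<omega>' where "good \<omega>'" and \<omega>': "(\<lambda>n. free_energy_n K \<beta> h \<omega>' n) \<longlonglongrightarrow> f_que \<mu>0 K \<beta> h"
      using eventually_happens'[OF P.ae_filter_bot eventually_conj[OF good AE_tendsto_f_que[OF \<mu>0 f_exists[OF \<beta>]]]]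
      by blast
    show "(\<lambda>n. free_energy_n K \<beta> h \<omega> n) \<longlonglongrightarrow> f_que \<mu>0 K \<beta> h"
    proof (rule free_energy_n_tendsto_transfer[where K=K, OF K K_pos _ _ _ _ \<beta> \<omega>'])
      show "0 \<le> C" using C by simp
      show "eventually (\<lambda>n. (\<Sum>k<n. \<bar>\<omega> k\<bar>) \<le> C * real n) sequentially"
        "eventually (\<lambda>n. (\<Sum>k<n. \<bar>\<omega>' k\<bar>) \<le> C * real n) sequentially"
        using \<open>good \<omega>\<close> \<open>good \<omega>'\<close> unfolding good_def by blast+
      show "\<exists>d. (\<lambda>n. free_energy_n K q r \<omega> n) \<longlonglongrightarrow> d \<and> (\<lambda>n. free_energy_n K q r \<omega>' n) \<longlonglongrightarrow> d"
        if "q \<in> \<rat>" "0 \<le> q" "r \<in> \<rat>" for q r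
        using \<open>good \<omega>\<close> \<open>good \<omega>'\<close> that unfolding good_def by blast
    qed
  qed
qed

theorem lemma3p1:
  fixes K :: "nat \<Rightarrow> real" and \<alpha> :: real and \<mu>0 :: "real measure"
  assumes K_nonneg: "\<And>n. K n \<ge> 0"
    and K_zero: "K 0 = 0"
    and K_sum: "K sums 1"
    and K_pos_ev: "eventually (\<lambda>n. K n > 0) sequentially"
    and K_tail: "(\<lambda>n. ln (K n) / ln (real n)) \<longlonglongrightarrow> - (1 + \<alpha>)"
    and alpha_nonneg: "\<alpha> \<ge> 0"
    and mu_prob: "prob_space \<mu>0"
    and mu_sets: "sets \<mu>0 = sets borel"
    and mu_mgf: "\<And>l. integrable \<mu>0 (\<lambda>x. exp (l * x))"
    and mu_mean: "(\<integral>x. x \<partial>\<mu>0) = 0"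
    and mu_var: "(\<integral>x. x ^ 2 \<partial>\<mu>0) = 1"
    and f_exists: "\<And>\<beta> h. \<beta> \<ge> 0 \<Longrightarrow> \<exists>c. AE \<omega> in (\<Pi>\<^sub>M i\<in>(UNIV::nat set). \<mu>0).
                     (\<lambda>n. ln (Zpart K \<beta> h \<omega> n) / real n) \<longlonglongrightarrow> c"
  shows "AE \<omega> in (\<Pi>\<^sub>M i\<in>(UNIV::nat set). \<mu>0).
           \<forall>\<beta>\<ge>0. \<forall>h::real.
             (S_que_left K \<beta> \<omega> < ereal h \<longrightarrow> f_que \<mu>0 K \<beta> h = 0) \<and>
             (S_que_left K \<beta> \<omega> > ereal h \<longrightarrow> f_que \<mu>0 K \<beta> h > 0)"
proof -
  have K_le_1: "\<And>n. K n \<le> 1" using le_1_of_sums_1[OF K_nonneg K_sum] .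
  have lnK: "(\<lambda>n. ln (K n) / real n) \<longlonglongrightarrow> 0" using tendsto_ln_div_of_ln_ratio[OF K_tail] .
  have "AE \<omega> in (\<Pi>\<^sub>M i\<in>(UNIV::nat set). \<mu>0).
      (\<forall>\<beta>\<ge>0. \<forall>h. (\<lambda>n. free_energy_n K \<beta> h \<omega> n) \<longlonglongrightarrow> f_que \<mu>0 K \<beta> h) \<and>
      (\<exists>A\<ge>0. \<forall>j. \<bar>\<omega> j\<bar> \<le> A + 2 * ln (real j + 1))"
    using AE_free_energy_n_tendsto_f_que[where K=K, OF K_nonneg K_pos_ev mu_prob mu_sets mu_mgf f_exists]
      AE_abs_le_log[OF mu_prob mu_sets mu_mgf] by (rule eventually_conj)
  then show ?thesis
  proof (rule eventually_mono, intro allI impI conjI)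
    fix \<omega> :: "nat \<Rightarrow> real" and \<beta> h :: real
    assume \<omega>: "(\<forall>\<beta>\<ge>0. \<forall>h. (\<lambda>n. free_energy_n K \<beta> h \<omega> n) \<longlonglongrightarrow> f_que \<mu>0 K \<beta> h) \<and>
      (\<exists>A\<ge>0. \<forall>j. \<bar>\<omega> j\<bar> \<le> A + 2 * ln (real j + 1))" and \<beta>: "0 \<le> \<beta>"
    then obtain A where A: "A \<ge> 0" "\<And>j. \<bar>\<omega> j\<bar> \<le> A + 2 * ln (real j + 1)" by blast
    have lim: "(\<lambda>n. free_energy_n K \<beta> h \<omega> n) \<longlonglongrightarrow> f_que \<mu>0 K \<beta> h" using \<omega> \<beta> by blast
    show "f_que \<mu>0 K \<beta> h = 0" if "S_que_left K \<beta> \<omega> < ereal h"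
      using free_energy_limit_eq_0_of_S_que_left_less[OF K_zero K_nonneg K_le_1 K_pos_ev lnK \<beta> A lim that] .
    show "f_que \<mu>0 K \<beta> h > 0" if "S_que_left K \<beta> \<omega> > ereal h"
      using free_energy_limit_pos_of_S_que_left_greater[OF K_zero K_nonneg lim that] .
  qed
qed

end
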